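(* Let $s\in\Sigma^n$ and let $b=s[0]$ be its first symbol. Then \[P(H(s)) - P(H(ICR(s))) \equiv e_b \mod K.\]
   Context: Let $k\ge 1$ be an integer, $\Sigma=\{0,1,\dots,k-1\}$ with arithmetic on symbols taken modulo $k$, and $n\ge 1$. For $s\in\Sigma^n$ write $s=s[0]s[1]\cdots s[n-1]$. The histogram of a string $s$ is $H(s):\Sigma\to\mathbb{Z}$, $H(s)(c)=$ number of occurrences of $c$ in $s$. For $b\in\Sigma$, $e_b:\Sigma\to\mathbb{Z}$ is the indicator function of $b$. $K:\Sigma\to\mathbb{Z}$ is the constant function $1$. For $H:\Sigma\to\mathbb{Z}$, its partial sum is $P(H):\Sigma\to\mathbb{Z}$, $P(H)(i)=\sum_{j=0}^{i}H(j)$. For $F,G:\Sigma\to\mathbb{Z}$, $F\equiv G \mod K$ means $F-G$ is an integer multiple of $K$. The incremented cycle register rule is $ICR(s)=s[1]s[2]\cdots s[n-1](s[0]+1)$. *)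

theory Defs
  imports Main
begin

(* Alphabet Sigma = {0..<k}; strings are lists over it; functions Sigma -> Z are
   represented as nat => int, only their values on {0..<k} matter. *)

definition hist :: "nat list \<Rightarrow> nat \<Rightarrow> int" where
  "hist s c = int (count_list s c)"

definition ind :: "nat \<Rightarrow> nat \<Rightarrow> int" where
  "ind b c = (if c = b then 1 else 0)"

definition psum :: "(nat \<Rightarrow> int) \<Rightarrow> nat \<Rightarrow> int" where
  "psum H i = (\<Sum>j\<le>i. H j)"

(* F \<equiv> G mod K over alphabet {0..<k}: F - G is an integer multiple of the constant 1 function *)
definition cong_K :: "nat \<Rightarrow> (nat \<Rightarrow> int) \<Rightarrow> (nat \<Rightarrow> int) \<Rightarrow> bool" where
  "cong_K k F G \<longleftrightarrow> (\<exists>m::int. \<forall>c<k. F c - G c = m)"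

definition ICR :: "nat \<Rightarrow> nat list \<Rightarrow> nat list" where
  "ICR k s = tl s @ [(hd s + 1) mod k]"

end

theory Submission
  imports Defs
begin

(* One step of ICR removes one occurrence of b = s[0] and adds one of b + 1 mod k, so the
   difference of partial sums is P(e_b) - P(e_(b+1 mod k)), a step function that equals e_b
   when b + 1 < k and e_b - K when b = k - 1. *)

lemma psum_ind: "psum (ind b) c = (if b \<le> c then 1 else 0)"
proof -
  have "(\<Sum>j\<le>c. ind b j) = (\<Sum>j\<in>{..c}. if j = b then 1 else 0)"
    by (simp add: ind_def)
  also have "\<dots> = (if b \<le> c then 1 else 0)"
    by (simp add: sum.delta)
  finally show ?thesis by (simp add: psum_def)
qed

lemma psum_diff: "psum (\<lambda>c. f c - g c) i = psum f i - psum g i"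
  by (simp add: psum_def sum_subtractf)

lemma hist_ICR_Cons:
  "hist (ICR k (b # t)) c = hist (b # t) c - ind b c + ind ((b + 1) mod k) c"
  by (simp add: ICR_def hist_def ind_def)

lemma psum_hist_diff_ICR_Cons:
  "psum (hist (b # t)) c - psum (hist (ICR k (b # t))) c
     = psum (ind b) c - psum (ind ((b + 1) mod k)) c"
proof -
  have "hist (b # t) = (\<lambda>c. hist (ICR k (b # t)) c - (ind ((b + 1) mod k) c - ind b c))"
    by (simp add: hist_ICR_Cons)
  then show ?thesis
    by (simp add: psum_diff)
qed

lemma psum_ind_diff_succ_mod:
  assumes "b < k" and "c < k"
  shows "psum (ind b) c - psum (ind ((b + 1) mod k)) c - ind b c
           = (if b + 1 < k then 0 else -1)"
  using assms by (cases "b + 1 = k") (auto simp: psum_ind ind_def)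

theorem lemma1:
  fixes k n :: nat and s :: "nat list"
  assumes "k \<ge> 1" and "n \<ge> 1"
    and "length s = n" and "\<forall>x\<in>set s. x < k"
  shows "cong_K k (\<lambda>c. psum (hist s) c - psum (hist (ICR k s)) c) (ind (s ! 0))"
proof -
  obtain b t where s: "s = b # t"
    using assms(2,3) by (cases s) auto
  have "b < k"
    using assms(4) s by simp
  have "psum (hist s) c - psum (hist (ICR k s)) c - ind (s ! 0) c
          = (if b + 1 < k then 0 else -1)" if "c < k" for c
    using psum_ind_diff_succ_mod[OF \<open>b < k\<close> that]
    by (simp only: s psum_hist_diff_ICR_Cons nth_Cons_0)
  then show ?thesis
    unfolding cong_K_def by blast
qed

end
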